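(* Let $\mathcal{C}$ be a near MDS (NMDS) linear code over $\mathbb{F}_q$ with parameters $[n,k,n-k]$. If $\min\{k,n-k\}\ge 3$ and the supports of the minimum-weight codewords of $\mathcal{C}$ form a $2$-design (i.e. $(\mathcal{P}(\mathcal{C}),\mathcal{H}_{n-k}(\mathcal{C}))$ is a $2$-design), then $(\mathcal{P}(\mathcal{C}),\mathcal{H}_w(\mathcal{C}))$ and $(\mathcal{P}(\mathcal{C}^\perp),\mathcal{H}_w(\mathcal{C}^\perp))$ are $2$-designs for every $w$ with $2\le w\le n$.
   Context: An $[n,k,d]$ linear code is a $k$-dimensional subspace of $\mathbb{F}_q^n$ with minimum Hamming distance $d$; $\mathcal{C}^\perp$ is its dual with respect to the standard inner product. A code is AMDS (almost MDS) if it has parameters $[n,k,n-k]$, and NMDS if both $\mathcal{C}$ and $\mathcal{C}^\perp$ are AMDS (so $\mathcal{C}^\perp$ has parameters $[n,n-k,k]$). For a code $\mathcal{C}$ of length $n$, $\mathcal{P}(\mathcal{C})=\{1,\dots,n\}$ is the set of coordinate positions, and $\mathcal{H}_w(\mathcal{C})$ is the multiset $\{\{\operatorname{supp}(\mathbf c):\mathbf c\in\mathcal{C},\ \operatorname{wt}(\mathbf c)=w\}\}$ with every multiplicity divided by $q-1$. A $t$-$(n,w,\lambda)$ design is a pair (point set of size $n$, multiset of $w$-subsets called blocks) such that every $t$-subset of points lies in exactly $\lambda$ blocks; an empty block family counts as a (trivial) design. *)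

theory Defs
  imports "HOL-Analysis.Analysis" "HOL-Library.Multiset"
begin

(* Vectors of F_q^n are modelled as 'a ^ 'n with 'a a finite field and 'n a finite
   index type of coordinate positions; n = CARD('n). *)

definition linear_code :: "('a::{field,finite} ^ 'n) set \<Rightarrow> bool" where
  "linear_code C \<longleftrightarrow> vec.subspace C"

definition supp :: "'a::zero ^ 'n \<Rightarrow> 'n set" where
  "supp x = {i. x $ i \<noteq> 0}"

definition hwt :: "'a::zero ^ 'n \<Rightarrow> nat" where
  "hwt x = card (supp x)"

(* minimum Hamming distance = minimum weight of a nonzero codeword *)
definition min_dist :: "('a::zero ^ 'n) set \<Rightarrow> nat" where
  "min_dist C = Min (hwt ` (C - {0}))"

definition std_inner :: "'a::comm_semiring_0 ^ 'n \<Rightarrow> 'a ^ 'n \<Rightarrow> 'a" where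
  "std_inner x y = (\<Sum>i\<in>UNIV. x $ i * y $ i)"

definition dual_code :: "('a::{field,finite} ^ 'n) set \<Rightarrow> ('a ^ 'n) set" where
  "dual_code C = {x. \<forall>c\<in>C. std_inner x c = 0}"

definition has_params :: "('a::{field,finite} ^ 'n::finite) set \<Rightarrow> nat \<Rightarrow> nat \<Rightarrow> nat \<Rightarrow> bool" where
  "has_params C n k d \<longleftrightarrow> linear_code C \<and> CARD('n) = n \<and> vec.dim C = k \<and> min_dist C = d"

definition AMDS :: "('a::{field,finite} ^ 'n::finite) set \<Rightarrow> bool" where
  "AMDS C \<longleftrightarrow> linear_code C \<and> min_dist C = CARD('n) - vec.dim C"

definition NMDS :: "('a::{field,finite} ^ 'n::finite) set \<Rightarrow> bool" where
  "NMDS C \<longleftrightarrow> AMDS C \<and> AMDS (dual_code C)"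

definition positions :: "('a ^ 'n::finite) set \<Rightarrow> 'n set" where
  "positions C = UNIV"

definition H :: "('a::{field,finite} ^ 'n::finite) set \<Rightarrow> nat \<Rightarrow> 'n set multiset" where
  "H C w = (\<Sum>S\<in>supp ` {c\<in>C. hwt c = w}.
              replicate_mset (card {c\<in>C. hwt c = w \<and> supp c = S} div (CARD('a) - 1)) S)"

(* t-(v,w,lambda) design with point set P and block multiset B (empty B allowed) *)
definition is_t_design :: "nat \<Rightarrow> 'p set \<Rightarrow> 'p set multiset \<Rightarrow> bool" where
  "is_t_design t P B \<longleftrightarrow> finite P \<and>
     (\<exists>w. \<forall>b\<in>#B. b \<subseteq> P \<and> card b = w) \<and>
     (\<exists>lam. \<forall>T. T \<subseteq> P \<and> card T = t \<longrightarrow> size (filter_mset (\<lambda>b. T \<subseteq> b) B) = lam)"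

end

theory Submission
  imports Defs
begin

(*
  Write d = n - k for the minimum distance of C; the dual has minimum distance k = n - d.
  Counting the pairs (x, c) of the dual code and of C with x supported in V gives
  |C^perp restricted to V| * |C| = q^|V| * |C restricted to the complement of V|,
  so the number of codewords supported inside a set W of positions depends only on |W|
  unless |W| = d: it is 1 below d and q^(|W| - d) above d.  Counting the pairs (c, W) with
  supp c <= W <= -S and |W| = m expresses these numbers as a triangular binomial transform
  of the numbers A_w(S) of weight-w codewords avoiding S.  Hence, if A_d(S) depends only on
  |S| for |S| <= 2, then so does every A_w(S), and inclusion-exclusion turns this into the
  2-design property at every weight w.  For C the condition on A_d is the hypothesis (a
  2-design is also a 1-design).  For the dual code, complementing supports matches its
  minimum-weight codewords avoiding S with those of C containing S.
*)

definition subcode_on :: "('a::zero ^ 'n) set \<Rightarrow> 'n set \<Rightarrow> ('a ^ 'n) set" where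
  "subcode_on X V = {c \<in> X. supp c \<subseteq> V}"

definition wt_covering :: "('a::zero ^ 'n) set \<Rightarrow> nat \<Rightarrow> 'n set \<Rightarrow> nat" where
  "wt_covering X w T = card {c \<in> X. hwt c = w \<and> T \<subseteq> supp c}"

definition wt_avoiding :: "('a::zero ^ 'n) set \<Rightarrow> nat \<Rightarrow> 'n set \<Rightarrow> nat" where
  "wt_avoiding X w S = card {c \<in> X. hwt c = w \<and> supp c \<inter> S = {}}"

definition const_on_card :: "nat \<Rightarrow> ('p set \<Rightarrow> nat) \<Rightarrow> bool" where
  "const_on_card t f \<longleftrightarrow> (\<forall>S S'. card S = t \<longrightarrow> card S' = t \<longrightarrow> f S = f S')"

lemma const_on_card_1: "const_on_card 1 f \<longleftrightarrow> (\<forall>x x'. f {x} = f {x'})"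
  unfolding const_on_card_def by (auto simp: card_1_singleton_iff)

lemma const_on_card_2:
  "const_on_card 2 f \<longleftrightarrow> (\<forall>x y x' y'. x \<noteq> y \<longrightarrow> x' \<noteq> y' \<longrightarrow> f {x, y} = f {x', y'})"
  unfolding const_on_card_def card_2_iff by blast

lemma const_on_card_iff_ex: "const_on_card t f \<longleftrightarrow> (\<exists>lam. \<forall>T. card T = t \<longrightarrow> f T = lam)"
  unfolding const_on_card_def by metis

section \<open>Counting subsets\<close>

lemma sum_card_filter_swap:
  assumes "finite A" "finite B"
  shows "(\<Sum>a\<in>A. card {b\<in>B. R a b}) = (\<Sum>b\<in>B. card {a\<in>A. R a b})"
proof -
  have "(\<Sum>a\<in>A. card {b\<in>B. R a b}) = (\<Sum>a\<in>A. \<Sum>b\<in>B. if R a b then 1 else 0)"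
    using assms by (simp add: sum.If_cases Int_def)
  also have "\<dots> = (\<Sum>b\<in>B. \<Sum>a\<in>A. if R a b then 1 else 0)"
    by (rule sum.swap)
  also have "\<dots> = (\<Sum>b\<in>B. card {a\<in>A. R a b})"
    using assms by (simp add: sum.If_cases Int_def)
  finally show ?thesis .
qed

lemma card_Compl_finite: "card (- A) = CARD('n::finite) - card (A :: 'n set)"
  by (simp add: Compl_eq_Diff_UNIV card_Diff_subset)

lemma card_le_CARD: "card (A :: 'n::finite set) \<le> CARD('n)"
  by (rule card_mono) auto

lemma card_supersets:
  assumes "finite V"
  shows "card {W. W \<subseteq> V \<and> card W = m \<and> A \<subseteq> W}
           = (if A \<subseteq> V \<and> card A \<le> m then (card V - card A) choose (m - card A) else 0)"
proof (cases "A \<subseteq> V \<and> card A \<le> m")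
  case True
  then have A: "A \<subseteq> V" "card A \<le> m" "finite A"
    using assms finite_subset by auto
  have "bij_betw (\<lambda>W. W - A) {W. W \<subseteq> V \<and> card W = m \<and> A \<subseteq> W}
          {W. W \<subseteq> V - A \<and> card W = m - card A}"
  proof (rule bij_betwI[where g = "\<lambda>W. W \<union> A"])
    show "(\<lambda>W. W \<union> A) \<in> {W. W \<subseteq> V - A \<and> card W = m - card A} \<rightarrow> {W. W \<subseteq> V \<and> card W = m \<and> A \<subseteq> W}"
    proof
      fix W assume W: "W \<in> {W. W \<subseteq> V - A \<and> card W = m - card A}"
      then have "card (W \<union> A) = card W + card A"
        using A assms by (subst card_Un_disjoint) (auto intro: finite_subset)
      then show "W \<union> A \<in> {W. W \<subseteq> V \<and> card W = m \<and> A \<subseteq> W}" using W A by auto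
    qed
  qed (use A assms in \<open>auto simp: card_Diff_subset finite_subset\<close>)
  then have "card {W. W \<subseteq> V \<and> card W = m \<and> A \<subseteq> W} = card (V - A) choose (m - card A)"
    using assms by (simp add: bij_betw_same_card n_subsets)
  then show ?thesis using A True by (simp add: card_Diff_subset)
next
  case False
  have "{W. W \<subseteq> V \<and> card W = m \<and> A \<subseteq> W} = {}"
    using False assms by (auto dest: card_mono[OF finite_subset])
  then show ?thesis using False by (simp only: card.empty if_False)
qed

lemma binomial_transform_eq_imp_eq:
  fixes x y :: "nat \<Rightarrow> nat"
  assumes transform: "\<And>m. m \<noteq> d \<Longrightarrow>
      (\<Sum>v\<le>m. x v * ((N - v) choose (m - v))) = (\<Sum>v\<le>m. y v * ((N - v) choose (m - v)))"
    and "x d = y d"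
  shows "x w = y w"
proof (induction w rule: less_induct)
  case (less w)
  show ?case
  proof (cases "w = d")
    case False
    have "(\<Sum>v<w. x v * ((N - v) choose (w - v))) = (\<Sum>v<w. y v * ((N - v) choose (w - v)))"
      using less.IH by simp
    then show ?thesis
      using transform[OF False] by (simp add: lessThan_Suc_atMost[symmetric])
  qed (use assms(2) in simp)
qed

section \<open>Subspaces of a finite vector space and the standard inner product\<close>

lemma two_le_card_field: "2 \<le> CARD('a::{field,finite})"
proof -
  have "card {0::'a, 1} \<le> CARD('a)" by (rule card_mono) auto
  then show ?thesis by simp
qed

lemma card_subspace:
  fixes S :: "('a::{field,finite} ^ 'n) set"
  assumes "vec.subspace S"
  shows "card S = CARD('a) ^ vec.dim S"
proof -
  obtain B where B: "B \<subseteq> S" "vec.independent B" "S \<subseteq> vec.span B" "card B = vec.dim S"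
    by (rule vec.basis_exists)
  have fin: "finite B" using B(2) vec.finiteI_independent by blast
  have span: "vec.span B = S" using B assms vec.span_subspace by blast
  let ?P = "PiE B (\<lambda>_. UNIV :: 'a set)"
  let ?comb = "\<lambda>u. \<Sum>v\<in>B. u v *s v"
  have "bij_betw ?comb (?P) (vec.span B)"
  proof (rule bij_betwI')
    fix u u' assume u: "u \<in> ?P" and u': "u' \<in> ?P"
    show "?comb u = ?comb u' \<longleftrightarrow> u = u'"
    proof
      assume "?comb u = ?comb u'"
      then have "(\<Sum>v\<in>B. (u v - u' v) *s v) = 0"
        by (simp add: vector_sub_rdistrib sum_subtractf)
      then have "\<forall>v\<in>B. u v - u' v = 0"
        using vec.independent_explicit[THEN iffD1, OF B(2), THEN conjunct2, rule_format,
            of "\<lambda>v. u v - u' v"] by blast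
      then show "u = u'" using u u' by (auto intro: PiE_ext)
    qed simp
  next
    fix u assume "u \<in> ?P"
    then show "?comb u \<in> vec.span B" using vec.span_finite[OF fin] by auto
  next
    fix y assume "y \<in> vec.span B"
    then obtain u where "y = ?comb u" using vec.span_finite[OF fin] by auto
    then show "\<exists>u\<in>?P. y = ?comb u"
      by (intro bexI[of _ "restrict u B"]) auto
  qed
  then have "card ?P = card (vec.span B)"
    by (rule bij_betw_same_card)
  then show ?thesis using span B(4) fin by (simp add: card_PiE)
qed

lemma card_subspace_eq_mult_card_kernel:
  fixes G :: "('a::{field,finite} ^ 'n) set" and f :: "'a ^ 'n \<Rightarrow> 'a"
  assumes G: "vec.subspace G"
    and add: "\<And>x y. x \<in> G \<Longrightarrow> y \<in> G \<Longrightarrow> f (x + y) = f x + f y"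
    and scale: "\<And>t x. x \<in> G \<Longrightarrow> f (t *s x) = t * f x"
    and u: "u \<in> G" "f u \<noteq> 0"
  shows "card G = CARD('a) * card {x \<in> G. f x = 0}"
proof -
  define e where "e = inverse (f u) *s u"
  have e: "e \<in> G" "f e = 1"
    using u scale vec.subspace_scale[OF G] by (auto simp: e_def)
  have shift: "f (t *s e + h) = t + f h" if "h \<in> G" for t h
    using add[OF vec.subspace_scale[OF G e(1)] that] scale[OF e(1)] e(2) by simp
  have "bij_betw (\<lambda>(t, h). t *s e + h) (UNIV \<times> {x \<in> G. f x = 0}) G"
  proof (rule bij_betwI[where g = "\<lambda>g. (f g, g - f g *s e)"])
    have "f (g - f g *s e) = 0" if "g \<in> G" for g
    proof -
      have "f ((- f g) *s e + g) = 0" using shift[OF that, of "- f g"] by simp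
      moreover have "(- f g) *s e + g = g - f g *s e"
        by (simp add: vec.scale_minus_left)
      ultimately show ?thesis by metis
    qed
    then show "(\<lambda>g. (f g, g - f g *s e)) \<in> G \<rightarrow> UNIV \<times> {x \<in> G. f x = 0}"
      using G e shift by (auto intro: vec.subspace_diff vec.subspace_scale)
  qed (use G e shift in \<open>auto intro: vec.subspace_add vec.subspace_scale\<close>)
  then show ?thesis
    by (simp add: bij_betw_same_card[symmetric] card_cartesian_product)
qed

lemma std_inner_commute: "std_inner x y = std_inner y (x :: 'a::comm_semiring_0 ^ 'n)"
  by (simp add: std_inner_def mult.commute)

lemma std_inner_add_left: "std_inner (x + y) z = std_inner x z + std_inner y (z :: 'a::comm_semiring_0 ^ 'n)"
  by (simp add: std_inner_def distrib_right sum.distrib)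

lemma std_inner_scale_left: "std_inner (t *s x) y = t * std_inner x (y :: 'a::comm_ring_1 ^ 'n)"
  by (simp add: std_inner_def sum_distrib_left mult.assoc)

lemma std_inner_axis_left: "std_inner (axis i 1) y = y $ i" for y :: "'a::comm_ring_1 ^ 'n::finite"
proof -
  have "std_inner (axis i 1) y = (\<Sum>j\<in>UNIV. if j = i then y $ i else 0)"
    unfolding std_inner_def by (rule sum.cong) (auto simp: axis_def)
  then show ?thesis by simp
qed

lemma std_inner_eq_0_if_disjoint_supp:
  assumes "supp x \<inter> supp y = {}"
  shows "std_inner x (y :: 'a::comm_semiring_0 ^ 'n) = 0"
  unfolding std_inner_def
proof (intro sum.neutral ballI)
  fix i
  have "x $ i = 0 \<or> y $ i = 0" using assms by (auto simp: supp_def)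
  then show "x $ i * y $ i = 0" by auto
qed

lemma subspace_dual_code: "vec.subspace (dual_code C)"
  by (rule vec.subspaceI)
     (auto simp: dual_code_def std_inner_add_left std_inner_scale_left, simp add: std_inner_def)

lemma subspace_supported: "vec.subspace {x :: 'a::field ^ 'n. supp x \<subseteq> V}"
  by (rule vec.subspaceI) (auto simp: supp_def subset_iff, metis add.right_neutral)

lemma card_supported: "card {x :: 'a::{zero,finite} ^ 'n::finite. supp x \<subseteq> V} = CARD('a) ^ card V"
proof -
  have "bij_betw (\<lambda>x. restrict (\<lambda>i. x $ i) V) {x :: 'a ^ 'n. supp x \<subseteq> V} (PiE V (\<lambda>_. UNIV :: 'a set))"
  proof (rule bij_betwI[where g = "\<lambda>f. \<chi> i. if i \<in> V then f i else 0"])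
    fix f :: "'n \<Rightarrow> 'a" assume "f \<in> PiE V (\<lambda>_. UNIV :: 'a set)"
    then show "restrict (\<lambda>i. (\<chi> i. if i \<in> V then f i else 0) $ i) V = f"
      by (auto simp: PiE_def extensional_def restrict_def)
  qed (auto simp: supp_def vec_eq_iff)
  then show ?thesis by (simp add: bij_betw_same_card card_PiE)
qed

lemma card_orthogonal_in_subspace:
  fixes G :: "('a::{field,finite} ^ 'n) set"
  assumes G: "vec.subspace G"
  shows "CARD('a) * card {x \<in> G. std_inner x y = 0}
           = (if \<forall>x\<in>G. std_inner x y = 0 then CARD('a) * card G else card G)"
proof (cases "\<forall>x\<in>G. std_inner x y = 0")
  case False
  then obtain u where u: "u \<in> G" "std_inner u y \<noteq> 0" by blast
  have "card G = CARD('a) * card {x \<in> G. std_inner x y = 0}"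
    by (rule card_subspace_eq_mult_card_kernel[where f = "\<lambda>x. std_inner x y", OF G _ _ u])
       (simp_all add: std_inner_add_left std_inner_scale_left)
  then show ?thesis by (simp only: if_not_P[OF False])
next
  case True
  then have "{x \<in> G. std_inner x y = 0} = G" by blast
  then show ?thesis using True by simp
qed

lemma sum_card_orthogonal:
  fixes A B :: "('a::{field,finite} ^ 'n) set"
  assumes A: "vec.subspace A"
  shows "CARD('a) * (\<Sum>b\<in>B. card {a \<in> A. std_inner a b = 0})
           = card B * card A + (CARD('a) - 1) * card A * card {b \<in> B. \<forall>a\<in>A. std_inner a b = 0}"
proof -
  let ?K = "{b \<in> B. \<forall>a\<in>A. std_inner a b = 0}"
  have "CARD('a) * (\<Sum>b\<in>B. card {a \<in> A. std_inner a b = 0})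
          = (\<Sum>b\<in>B. card A + (if b \<in> ?K then (CARD('a) - 1) * card A else 0))"
    unfolding sum_distrib_left
  proof (intro sum.cong refl)
    fix b assume "b \<in> B"
    then show "CARD('a) * card {a \<in> A. std_inner a b = 0}
                 = card A + (if b \<in> ?K then (CARD('a) - 1) * card A else 0)"
      using card_orthogonal_in_subspace[OF A, of b] two_le_card_field[where 'a = 'a]
      by (simp add: algebra_simps)
  qed
  also have "\<dots> = card B * card A + (CARD('a) - 1) * card A * card ?K"
    by (simp add: sum.distrib sum.If_cases Int_def)
  finally show ?thesis .
qed

lemma card_annihilators:
  fixes E C :: "('a::{field,finite} ^ 'n) set"
  assumes E: "vec.subspace E" and C: "vec.subspace C"
  shows "card {x \<in> E. \<forall>c\<in>C. std_inner x c = 0} * card C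
           = card E * card {c \<in> C. \<forall>x\<in>E. std_inner x c = 0}"
proof -
  have "(\<Sum>c\<in>C. card {x \<in> E. std_inner x c = 0}) = (\<Sum>x\<in>E. card {c \<in> C. std_inner c x = 0})"
    using sum_card_filter_swap[of C E "\<lambda>c x. std_inner x c = 0"]
    by (simp add: std_inner_commute)
  then have "(CARD('a) - 1) * card C * card {x \<in> E. \<forall>c\<in>C. std_inner c x = 0}
               = (CARD('a) - 1) * card E * card {c \<in> C. \<forall>x\<in>E. std_inner x c = 0}"
    using sum_card_orthogonal[OF E, of C] sum_card_orthogonal[OF C, of E] by simp
  then show ?thesis
    using two_le_card_field[where 'a = 'a] by (simp add: std_inner_commute mult.commute)
qed

lemma subcode_on_UNIV [simp]: "subcode_on X UNIV = X"
  by (simp add: subcode_on_def)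

lemma subcode_on_empty: "vec.subspace X \<Longrightarrow> subcode_on X {} = {0}"
  by (auto simp: subcode_on_def supp_def vec_eq_iff vec.subspace_0)

lemma card_subcode_on_dual_code:
  fixes C :: "('a::{field,finite} ^ 'n::finite) set"
  assumes C: "vec.subspace C"
  shows "card (subcode_on (dual_code C) V) * card C = CARD('a) ^ card V * card (subcode_on C (- V))"
proof -
  let ?E = "{x :: 'a ^ 'n. supp x \<subseteq> V}"
  have "subcode_on (dual_code C) V = {x \<in> ?E. \<forall>c\<in>C. std_inner x c = 0}"
    by (auto simp: subcode_on_def dual_code_def)
  moreover have "{c \<in> C. \<forall>x\<in>?E. std_inner x c = 0} = subcode_on C (- V)"
  proof (intro set_eqI iffI)
    fix c assume c: "c \<in> {c \<in> C. \<forall>x\<in>?E. std_inner x c = 0}"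
    have "c $ i = 0" if "i \<in> V" for i
      using c that std_inner_axis_left[of i c] by (auto simp: supp_def axis_def)
    then show "c \<in> subcode_on C (- V)" using c by (auto simp: subcode_on_def supp_def)
  next
    fix c assume "c \<in> subcode_on C (- V)"
    then show "c \<in> {c \<in> C. \<forall>x\<in>?E. std_inner x c = 0}"
      by (auto simp: subcode_on_def intro: std_inner_eq_0_if_disjoint_supp)
  qed
  ultimately show ?thesis
    using card_annihilators[OF subspace_supported C] by (simp add: card_supported)
qed

lemma dim_dual_code:
  fixes C :: "('a::{field,finite} ^ 'n::finite) set"
  assumes C: "vec.subspace C"
  shows "vec.dim (dual_code C) + vec.dim C = CARD('n)"
proof -
  have "card (dual_code C) * card C = CARD('a) ^ CARD('n)"
    using card_subcode_on_dual_code[OF C, of UNIV] by (simp add: subcode_on_empty[OF C])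
  then have "CARD('a) ^ (vec.dim (dual_code C) + vec.dim C) = CARD('a) ^ CARD('n)"
    by (simp add: power_add card_subspace C subspace_dual_code)
  then show ?thesis
    using two_le_card_field[where 'a = 'a] by (simp add: power_inject_exp)
qed

lemma dual_dual_code:
  fixes C :: "('a::{field,finite} ^ 'n::finite) set"
  assumes C: "vec.subspace C"
  shows "dual_code (dual_code C) = C"
proof -
  have "C \<subseteq> dual_code (dual_code C)"
    by (auto simp: dual_code_def std_inner_commute)
  moreover have "vec.dim (dual_code (dual_code C)) = vec.dim C"
    using dim_dual_code[OF C] dim_dual_code[OF subspace_dual_code, of C] by simp
  then have "card (dual_code (dual_code C)) = card C"
    by (simp add: card_subspace C subspace_dual_code)
  ultimately show ?thesis
    by (intro card_subset_eq[symmetric]) auto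
qed

section \<open>Subcodes of NMDS codes\<close>

lemma min_dist_le_hwt:
  fixes X :: "('a::{zero,finite} ^ 'n::finite) set"
  assumes "c \<in> X" "c \<noteq> 0"
  shows "min_dist X \<le> hwt c"
  unfolding min_dist_def using assms by (intro Min_le) auto

lemma subcode_on_below_min_dist:
  fixes X :: "('a::{field,finite} ^ 'n::finite) set"
  assumes X: "vec.subspace X" and V: "card V < min_dist X"
  shows "subcode_on X V = {0}"
proof -
  have "c = 0" if c: "c \<in> X" "supp c \<subseteq> V" for c
  proof (rule ccontr)
    assume "c \<noteq> 0"
    then have "min_dist X \<le> hwt c" using min_dist_le_hwt c(1) by blast
    moreover have "hwt c \<le> card V" unfolding hwt_def using c(2) by (simp add: card_mono)
    ultimately show False using V by simp
  qed
  then show ?thesis using X by (auto simp: subcode_on_def supp_def vec.subspace_0)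
qed

lemma card_subcode_on_min_dist:
  fixes X :: "('a::{field,finite} ^ 'n::finite) set"
  assumes X: "vec.subspace X" and V: "card V = min_dist X" "0 < min_dist X"
  shows "card (subcode_on X V) = Suc (card {c \<in> X. supp c = V})"
proof -
  have "supp c = V" if c: "c \<in> X" "supp c \<subseteq> V" "c \<noteq> 0" for c
  proof -
    have "card V \<le> card (supp c)"
      using min_dist_le_hwt[OF c(1,3)] V(1) by (simp add: hwt_def)
    then show ?thesis using c(2) card_mono[of V "supp c"] by (intro card_subset_eq) auto
  qed
  then have "subcode_on X V = insert 0 {c \<in> X. supp c = V}"
    using X by (auto simp: subcode_on_def supp_def vec.subspace_0)
  moreover have "0 \<notin> {c \<in> X. supp c = V}"
    using V by (auto simp: supp_def)
  ultimately show ?thesis by simp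
qed

lemma NMDS_subspace: "NMDS C \<Longrightarrow> vec.subspace C"
  by (simp add: NMDS_def AMDS_def linear_code_def)

lemma NMDS_dual_code:
  fixes C :: "('a::{field,finite} ^ 'n::finite) set"
  shows "NMDS C \<Longrightarrow> NMDS (dual_code C)"
  using dual_dual_code NMDS_subspace unfolding NMDS_def by metis

lemma NMDS_min_dist:
  fixes C :: "('a::{field,finite} ^ 'n::finite) set"
  assumes "NMDS C"
  shows "min_dist C + vec.dim C = CARD('n)"
  using assms dim_dual_code[OF NMDS_subspace[OF assms]] by (simp add: NMDS_def AMDS_def)

lemma NMDS_min_dist_dual_code:
  fixes C :: "('a::{field,finite} ^ 'n::finite) set"
  assumes "NMDS C"
  shows "min_dist (dual_code C) = vec.dim C"
  using NMDS_min_dist[OF NMDS_dual_code[OF assms]] dim_dual_code[OF NMDS_subspace[OF assms]]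
  by simp

lemma NMDS_card_subcode_on:
  fixes C :: "('a::{field,finite} ^ 'n::finite) set"
  assumes C: "NMDS C" and V: "card V \<noteq> min_dist C"
  shows "card (subcode_on C V) = (if card V < min_dist C then 1 else CARD('a) ^ (card V - min_dist C))"
proof (cases "card V < min_dist C")
  case True
  then show ?thesis using subcode_on_below_min_dist[OF NMDS_subspace[OF C]] by simp
next
  case False
  let ?q = "CARD('a)" and ?k = "vec.dim C" and ?d = "min_dist C"
  have n: "?d + ?k = CARD('n)" by (rule NMDS_min_dist[OF C])
  have "card (- V) < min_dist (dual_code C)"
    using False V n card_le_CARD[of V] by (simp add: NMDS_min_dist_dual_code[OF C] card_Compl_finite)
  then have "subcode_on (dual_code C) (- V) = {0}"
    by (rule subcode_on_below_min_dist[OF subspace_dual_code])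
  then have "?q ^ ?k = ?q ^ (CARD('n) - card V) * card (subcode_on C V)"
    using card_subcode_on_dual_code[OF NMDS_subspace[OF C], of "- V"]
    by (simp add: card_subspace NMDS_subspace[OF C] card_Compl_finite)
  moreover have "?q ^ ?k = ?q ^ (CARD('n) - card V) * ?q ^ (card V - ?d)"
  proof -
    have "?k = (CARD('n) - card V) + (card V - ?d)"
      using False n card_le_CARD[of V] by linarith
    then show ?thesis by (metis power_add)
  qed
  ultimately show ?thesis using False by simp
qed

lemma NMDS_card_supp_dual_code:
  fixes C :: "('a::{field,finite} ^ 'n::finite) set"
  assumes C: "NMDS C" and pos: "0 < vec.dim C" "0 < min_dist C" and W: "card W = vec.dim C"
  shows "card {x \<in> dual_code C. supp x = W} = card {c \<in> C. supp c = - W}"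
proof -
  have "card (subcode_on (dual_code C) W) * CARD('a) ^ vec.dim C
          = CARD('a) ^ vec.dim C * card (subcode_on C (- W))"
    using card_subcode_on_dual_code[OF NMDS_subspace[OF C], of W] W
    by (simp add: card_subspace NMDS_subspace[OF C])
  then have "card (subcode_on (dual_code C) W) = card (subcode_on C (- W))"
    by simp
  moreover have "card (subcode_on (dual_code C) W) = Suc (card {x \<in> dual_code C. supp x = W})"
    using W pos by (intro card_subcode_on_min_dist[OF subspace_dual_code])
                   (simp_all add: NMDS_min_dist_dual_code[OF C])
  moreover have "card (subcode_on C (- W)) = Suc (card {c \<in> C. supp c = - W})"
    using W pos NMDS_min_dist[OF C]
    by (intro card_subcode_on_min_dist[OF NMDS_subspace[OF C]]) (simp_all add: card_Compl_finite)
  ultimately show ?thesis by simp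
qed

lemma card_eq_sum_card_supp:
  fixes X :: "('a::zero ^ 'n) set"
  assumes "finite X" "finite F"
  shows "card {c \<in> X. supp c \<in> F} = (\<Sum>W\<in>F. card {c \<in> X. supp c = W})"
proof -
  have "{c \<in> X. supp c \<in> F} = (\<Union>W\<in>F. {c \<in> X. supp c = W})" by auto
  also have "card \<dots> = (\<Sum>W\<in>F. card {c \<in> X. supp c = W})"
    using assms by (intro card_UN_disjoint) auto
  finally show ?thesis .
qed

lemma NMDS_wt_avoiding_dual_code:
  fixes C :: "('a::{field,finite} ^ 'n::finite) set"
  assumes C: "NMDS C" and pos: "0 < vec.dim C" "0 < min_dist C"
  shows "wt_avoiding (dual_code C) (vec.dim C) S = wt_covering C (min_dist C) S"
proof -
  let ?k = "vec.dim C" and ?d = "min_dist C"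
  have n: "?d + ?k = CARD('n)" by (rule NMDS_min_dist[OF C])
  have "wt_avoiding (dual_code C) ?k S
          = card {x \<in> dual_code C. supp x \<in> {W. card W = ?k \<and> W \<inter> S = {}}}"
    unfolding wt_avoiding_def hwt_def by (rule arg_cong[where f = card]) auto
  also have "\<dots> = (\<Sum>W | card W = ?k \<and> W \<inter> S = {}. card {x \<in> dual_code C. supp x = W})"
    by (rule card_eq_sum_card_supp) auto
  also have "\<dots> = (\<Sum>W | card W = ?k \<and> W \<inter> S = {}. card {c \<in> C. supp c = - W})"
    by (intro sum.cong refl NMDS_card_supp_dual_code[OF C pos]) simp
  also have "\<dots> = (\<Sum>U | card U = ?d \<and> S \<subseteq> U. card {c \<in> C. supp c = U})"
    by (rule sum.reindex_bij_witness[where i = uminus and j = uminus])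
       (use n in \<open>auto simp: card_Compl_finite\<close>)
  also have "\<dots> = card {c \<in> C. supp c \<in> {U. card U = ?d \<and> S \<subseteq> U}}"
    by (rule card_eq_sum_card_supp[symmetric]) auto
  also have "\<dots> = wt_covering C ?d S"
    unfolding wt_covering_def hwt_def by (rule arg_cong[where f = card]) auto
  finally show ?thesis .
qed

section \<open>Weight distributions on the complements of small sets\<close>

lemma sum_card_subcode_on_subsets:
  fixes X :: "('a::zero ^ 'n::finite) set"
  assumes X: "finite X"
  shows "(\<Sum>W | W \<subseteq> - S \<and> card W = m. card (subcode_on X W))
           = (\<Sum>w\<le>m. wt_avoiding X w S * ((card (- S) - w) choose (m - w)))"
proof -
  let ?b = "\<lambda>w. (card (- S) - w) choose (m - w)"
  let ?A = "{c \<in> X. supp c \<subseteq> - S \<and> hwt c \<le> m}"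
  have "(\<Sum>W | W \<subseteq> - S \<and> card W = m. card (subcode_on X W))
          = (\<Sum>c\<in>X. card {W \<in> {W. W \<subseteq> - S \<and> card W = m}. supp c \<subseteq> W})"
    unfolding subcode_on_def
    using sum_card_filter_swap[of "{W. W \<subseteq> - S \<and> card W = m}" X "\<lambda>W c. supp c \<subseteq> W"] X
    by simp
  also have "\<dots> = (\<Sum>c\<in>X. if supp c \<subseteq> - S \<and> hwt c \<le> m then ?b (hwt c) else 0)"
  proof (intro sum.cong refl)
    fix c
    have "{W \<in> {W. W \<subseteq> - S \<and> card W = m}. supp c \<subseteq> W} = {W. W \<subseteq> - S \<and> card W = m \<and> supp c \<subseteq> W}"
      by auto
    then show "card {W \<in> {W. W \<subseteq> - S \<and> card W = m}. supp c \<subseteq> W}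
                 = (if supp c \<subseteq> - S \<and> hwt c \<le> m then ?b (hwt c) else 0)"
      using card_supersets[of "- S" m "supp c"] by (simp add: hwt_def)
  qed
  also have "\<dots> = (\<Sum>c\<in>?A. ?b (hwt c))"
    using X by (simp add: sum.inter_filter)
  also have "\<dots> = (\<Sum>w\<le>m. \<Sum>c | c \<in> ?A \<and> hwt c = w. ?b (hwt c))"
    using X by (intro sum.group[symmetric]) auto
  also have "\<dots> = (\<Sum>w\<le>m. wt_avoiding X w S * ?b w)"
  proof (intro sum.cong refl)
    fix w assume "w \<in> {..m}"
    then have "{c. c \<in> ?A \<and> hwt c = w} = {c \<in> X. hwt c = w \<and> supp c \<inter> S = {}}"
      by auto
    then show "(\<Sum>c | c \<in> ?A \<and> hwt c = w. ?b (hwt c)) = wt_avoiding X w S * ?b w"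
      by (simp add: wt_avoiding_def)
  qed
  finally show ?thesis .
qed

lemma const_on_card_wt_avoiding:
  fixes X :: "('a::zero ^ 'n::finite) set" and G :: "nat \<Rightarrow> nat"
  assumes X: "finite X"
    and subcodes: "\<And>V. card V \<noteq> d \<Longrightarrow> card (subcode_on X V) = G (card V)"
    and critical: "const_on_card t (wt_avoiding X d)"
  shows "const_on_card t (wt_avoiding X w)"
proof -
  have transform: "(\<Sum>v\<le>m. wt_avoiding X v S * ((card (- S) - v) choose (m - v)))
                     = (card (- S) choose m) * G m" if m: "m \<noteq> d" for S :: "'n set" and m
  proof -
    have "(\<Sum>v\<le>m. wt_avoiding X v S * ((card (- S) - v) choose (m - v)))
            = (\<Sum>W | W \<subseteq> - S \<and> card W = m. card (subcode_on X W))"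
      by (rule sum_card_subcode_on_subsets[OF X, symmetric])
    also have "\<dots> = (\<Sum>W | W \<subseteq> - S \<and> card W = m. G m)"
      by (rule sum.cong) (use subcodes m in auto)
    also have "\<dots> = (card (- S) choose m) * G m"
      by (simp add: n_subsets)
    finally show ?thesis .
  qed
  show ?thesis unfolding const_on_card_def
  proof (intro allI impI)
    fix S S' :: "'n set" assume S: "card S = t" "card S' = t"
    then have N: "card (- S) = card (- S')" by (simp add: card_Compl_finite)
    show "wt_avoiding X w S = wt_avoiding X w S'"
    proof (rule binomial_transform_eq_imp_eq[where d = d and N = "card (- S)"
          and x = "\<lambda>v. wt_avoiding X v S" and y = "\<lambda>v. wt_avoiding X v S'"])
      fix m assume "m \<noteq> d"
      then show "(\<Sum>v\<le>m. wt_avoiding X v S * ((card (- S) - v) choose (m - v)))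
                   = (\<Sum>v\<le>m. wt_avoiding X v S' * ((card (- S) - v) choose (m - v)))"
        using transform[of m S] transform[of m S'] N by simp
    next
      show "wt_avoiding X d S = wt_avoiding X d S'"
        using critical S unfolding const_on_card_def by blast
    qed
  qed
qed

lemma wt_covering_add_wt_avoiding_singleton:
  fixes X :: "('a::zero ^ 'n) set"
  assumes "finite X"
  shows "wt_covering X w {x} + wt_avoiding X w {x} = card {c \<in> X. hwt c = w}"
proof -
  have "{c \<in> X. hwt c = w} = {c \<in> X. hwt c = w \<and> {x} \<subseteq> supp c} \<union> {c \<in> X. hwt c = w \<and> supp c \<inter> {x} = {}}"
    by auto
  then show ?thesis
    using assms by (simp add: wt_covering_def wt_avoiding_def card_Un_disjoint disjoint_iff)
qed

lemma wt_covering_add_wt_avoiding_pair: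
  fixes X :: "('a::zero ^ 'n) set"
  assumes "finite X"
  shows "wt_covering X w {x, y} + wt_avoiding X w {x} + wt_avoiding X w {y}
           = card {c \<in> X. hwt c = w} + wt_avoiding X w {x, y}"
proof -
  let ?M = "{c \<in> X. hwt c = w}"
  let ?Ax = "{c \<in> X. hwt c = w \<and> supp c \<inter> {x} = {}}"
  let ?Ay = "{c \<in> X. hwt c = w \<and> supp c \<inter> {y} = {}}"
  let ?T = "{c \<in> X. hwt c = w \<and> {x, y} \<subseteq> supp c}"
  have "card ?Ax + card ?Ay = card (?Ax \<union> ?Ay) + card (?Ax \<inter> ?Ay)"
    using assms by (intro card_Un_Int) auto
  moreover have "?Ax \<inter> ?Ay = {c \<in> X. hwt c = w \<and> supp c \<inter> {x, y} = {}}"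
    by auto
  moreover have "card ?T + card (?Ax \<union> ?Ay) = card ?M"
  proof -
    have "card ?M = card (?T \<union> (?Ax \<union> ?Ay))"
      by (rule arg_cong[where f = card]) auto
    also have "\<dots> = card ?T + card (?Ax \<union> ?Ay)"
      using assms by (intro card_Un_disjoint) auto
    finally show ?thesis by simp
  qed
  ultimately show ?thesis by (simp add: wt_covering_def wt_avoiding_def)
qed

lemma const_on_card_wt_avoiding_iff_wt_covering:
  fixes X :: "('a::zero ^ 'n) set"
  assumes "finite X"
  shows "const_on_card 1 (wt_avoiding X w) \<and> const_on_card 2 (wt_avoiding X w)
           \<longleftrightarrow> const_on_card 1 (wt_covering X w) \<and> const_on_card 2 (wt_covering X w)"
    (is "?avoiding \<longleftrightarrow> ?covering")
proof
  note single = wt_covering_add_wt_avoiding_singleton[OF assms, of w]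
  note pair = wt_covering_add_wt_avoiding_pair[OF assms, of w]
  {
    assume ?avoiding
    then have a1: "\<And>x x'. wt_avoiding X w {x} = wt_avoiding X w {x'}"
      and a2: "\<And>x y x' y'. x \<noteq> y \<Longrightarrow> x' \<noteq> y' \<Longrightarrow> wt_avoiding X w {x, y} = wt_avoiding X w {x', y'}"
      unfolding const_on_card_1 const_on_card_2 by blast+
    have "wt_covering X w {x} = wt_covering X w {x'}" for x x'
      using single[of x] single[of x'] a1[of x x'] by linarith
    moreover have "wt_covering X w {x, y} = wt_covering X w {x', y'}" if "x \<noteq> y" "x' \<noteq> y'" for x y x' y'
      using pair[of x y] pair[of x' y'] a1[of x x'] a1[of y y'] a2[OF that] by linarith
    ultimately show ?covering unfolding const_on_card_1 const_on_card_2 by blast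
  }
  {
    assume ?covering
    then have c1: "\<And>x x'. wt_covering X w {x} = wt_covering X w {x'}"
      and c2: "\<And>x y x' y'. x \<noteq> y \<Longrightarrow> x' \<noteq> y' \<Longrightarrow> wt_covering X w {x, y} = wt_covering X w {x', y'}"
      unfolding const_on_card_1 const_on_card_2 by blast+
    have a1: "wt_avoiding X w {x} = wt_avoiding X w {x'}" for x x'
      using single[of x] single[of x'] c1[of x x'] by linarith
    moreover have "wt_avoiding X w {x, y} = wt_avoiding X w {x', y'}" if "x \<noteq> y" "x' \<noteq> y'" for x y x' y'
      using pair[of x y] pair[of x' y'] a1[of x x'] a1[of y y'] c2[OF that] by linarith
    ultimately show ?avoiding unfolding const_on_card_1 const_on_card_2 by blast
  }
qed

lemma sum_wt_covering_pairs:
  fixes X :: "('a::zero ^ 'n::finite) set"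
  assumes "finite X"
  shows "(\<Sum>y\<in>- {x}. wt_covering X w {x, y}) = wt_covering X w {x} * (w - 1)"
proof -
  let ?M = "{c \<in> X. hwt c = w \<and> {x} \<subseteq> supp c}"
  have "(\<Sum>y\<in>- {x}. wt_covering X w {x, y}) = (\<Sum>y\<in>- {x}. card {c \<in> ?M. y \<in> supp c})"
    unfolding wt_covering_def by (intro sum.cong refl arg_cong[where f = card]) auto
  also have "\<dots> = (\<Sum>c\<in>?M. card {y \<in> - {x}. y \<in> supp c})"
    using assms by (intro sum_card_filter_swap) auto
  also have "\<dots> = (\<Sum>c\<in>?M. w - 1)"
  proof (intro sum.cong refl)
    fix c assume "c \<in> ?M"
    moreover have "{y \<in> - {x}. y \<in> supp c} = supp c - {x}" by auto
    ultimately show "card {y \<in> - {x}. y \<in> supp c} = w - 1" by (simp add: hwt_def)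
  qed
  finally show ?thesis by (simp add: wt_covering_def)
qed

lemma const_on_card_1_wt_covering:
  fixes X :: "('a::zero ^ 'n::finite) set"
  assumes "finite X" "2 \<le> w" "const_on_card 2 (wt_covering X w)"
  shows "const_on_card 1 (wt_covering X w)"
proof -
  obtain lam where lam: "\<And>T. card T = 2 \<Longrightarrow> wt_covering X w T = lam"
    using assms(3) const_on_card_iff_ex by metis
  have count: "wt_covering X w {x} * (w - 1) = (CARD('n) - 1) * lam" for x
  proof -
    have "(\<Sum>y\<in>- {x}. wt_covering X w {x, y}) = (\<Sum>y\<in>- {x}. lam)"
      using lam by (intro sum.cong) auto
    then show ?thesis
      using sum_wt_covering_pairs[OF assms(1)] by (simp add: card_Compl_finite)
  qed
  have "wt_covering X w {x} = wt_covering X w {x'}" for x x'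
  proof -
    have "wt_covering X w {x} * (w - 1) = wt_covering X w {x'} * (w - 1)"
      using count[of x] count[of x'] by simp
    then show ?thesis using assms(2) by simp
  qed
  then show ?thesis unfolding const_on_card_1 by blast
qed

section \<open>Designs from codewords\<close>

lemma size_filter_mset_sum_replicate_mset:
  assumes "finite A"
  shows "size (filter_mset P (\<Sum>x\<in>A. replicate_mset (f x) x)) = (\<Sum>x\<in>A. if P x then f x else 0)"
proof -
  have replicate: "size (filter_mset P (replicate_mset n x)) = (if P x then n else 0)" for n x
    by (induction n) auto
  show ?thesis using assms by (induction A rule: finite_induct) (auto simp: replicate)
qed

lemma mem_sum_replicate_mset: "finite A \<Longrightarrow> b \<in># (\<Sum>x\<in>A. replicate_mset (f x) x) \<Longrightarrow> b \<in> A"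
  by (induction A rule: finite_induct) (auto split: if_splits)

lemma card_supp_eq_dvd:
  fixes X :: "('a::{field,finite} ^ 'n::finite) set"
  assumes X: "vec.subspace X" and i: "i \<in> S"
  shows "(CARD('a) - 1) dvd card {c \<in> X. supp c = S}"
proof -
  let ?Y = "{c \<in> X. supp c = S \<and> c $ i = 1}"
  have supp_scale: "supp (t *s c) = supp c" if "t \<noteq> 0" for t and c :: "'a ^ 'n"
    using that by (auto simp: supp_def)
  have ci: "c $ i \<noteq> 0" "c $ i * inverse (c $ i) = 1" if "supp c = S" for c :: "'a ^ 'n"
    using i that by (auto simp: supp_def)
  have "bij_betw (\<lambda>(t, c). t *s c) ((UNIV - {0}) \<times> ?Y) {c \<in> X. supp c = S}"
    by (rule bij_betwI[where g = "\<lambda>c. (c $ i, inverse (c $ i) *s c)"])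
       (use X ci supp_scale in \<open>auto simp: vec.subspace_scale\<close>)
  then have "card {c \<in> X. supp c = S} = (CARD('a) - 1) * card ?Y"
    by (simp add: bij_betw_same_card[symmetric] card_cartesian_product card_Diff_subset)
  then show ?thesis by simp
qed

lemma size_filter_H:
  fixes X :: "('a::{field,finite} ^ 'n::finite) set"
  assumes X: "vec.subspace X" and w: "0 < w"
  shows "size (filter_mset (\<lambda>b. T \<subseteq> b) (H X w)) * (CARD('a) - 1) = wt_covering X w T"
proof -
  let ?q = "CARD('a)"
  let ?Supp = "supp ` {c \<in> X. hwt c = w}"
  let ?N = "\<lambda>S. card {c \<in> X. hwt c = w \<and> supp c = S}"
  \<comment> \<open>nonzero multiples of a codeword share its support, so the division in H is exact\<close>
  have N: "?N S div (?q - 1) * (?q - 1) = ?N S" if "S \<in> ?Supp" for S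
  proof -
    have "card S = w" using that by (auto simp: hwt_def)
    then obtain i where "i \<in> S" using w by fastforce
    moreover have "{c \<in> X. hwt c = w \<and> supp c = S} = {c \<in> X. supp c = S}"
      using \<open>card S = w\<close> by (auto simp: hwt_def)
    ultimately show ?thesis using card_supp_eq_dvd[OF X] by simp
  qed
  have "size (filter_mset (\<lambda>b. T \<subseteq> b) (H X w)) * (?q - 1)
          = (\<Sum>S\<in>?Supp. if T \<subseteq> S then ?N S div (?q - 1) * (?q - 1) else 0)"
    unfolding H_def
    by (auto simp: size_filter_mset_sum_replicate_mset sum_distrib_right intro!: sum.cong)
  also have "\<dots> = (\<Sum>S\<in>?Supp. if T \<subseteq> S then ?N S else 0)"
    using N by (intro sum.cong) auto
  also have "\<dots> = (\<Sum>S | S \<in> ?Supp \<and> T \<subseteq> S. ?N S)"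
    by (simp add: sum.inter_filter)
  also have "\<dots> = card {c \<in> {c \<in> X. hwt c = w}. supp c \<in> {S \<in> ?Supp. T \<subseteq> S}}"
    by (subst card_eq_sum_card_supp) (auto intro!: sum.cong arg_cong[where f = card])
  also have "\<dots> = wt_covering X w T"
    unfolding wt_covering_def by (rule arg_cong[where f = card]) auto
  finally show ?thesis .
qed

lemma is_t_design_H_iff:
  fixes X :: "('a::{field,finite} ^ 'n::finite) set"
  assumes X: "vec.subspace X" and w: "0 < w"
  shows "is_t_design t (positions X) (H X w) \<longleftrightarrow> const_on_card t (wt_covering X w)"
proof -
  have blocks: "\<forall>b\<in>#H X w. b \<subseteq> UNIV \<and> card b = w"
    unfolding H_def by (auto dest!: mem_sum_replicate_mset[rotated] simp: hwt_def)
  have "0 < CARD('a) - 1" using two_le_card_field[where 'a = 'a] by simp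
  then have "const_on_card t (\<lambda>T. size (filter_mset (\<lambda>b. T \<subseteq> b) (H X w)))
               \<longleftrightarrow> const_on_card t (wt_covering X w)"
    unfolding const_on_card_def size_filter_H[OF X w, symmetric] by simp
  then show ?thesis
    using blocks unfolding is_t_design_def positions_def const_on_card_iff_ex by auto
qed

lemma NMDS_is_2_design_H:
  fixes C :: "('a::{field,finite} ^ 'n::finite) set"
  assumes C: "NMDS C" and w: "0 < w"
    and min_weight: "const_on_card 1 (wt_avoiding C (min_dist C))"
                    "const_on_card 2 (wt_avoiding C (min_dist C))"
  shows "is_t_design 2 (positions C) (H C w)"
proof -
  have "const_on_card t (wt_avoiding C w)" if "const_on_card t (wt_avoiding C (min_dist C))" for t
    using const_on_card_wt_avoiding[OF _ NMDS_card_subcode_on[OF C] that] by simp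
  then have "const_on_card 2 (wt_covering C w)"
    using min_weight const_on_card_wt_avoiding_iff_wt_covering[of C w] by simp
  then show ?thesis
    using is_t_design_H_iff[OF NMDS_subspace[OF C] w] by simp
qed

theorem mainTheorem1:
  fixes C :: "('a::{field,finite} ^ 'n::finite) set"
    and n k :: nat
  assumes "NMDS C"
    and "has_params C n k (n - k)"
    and "min k (n - k) \<ge> 3"
    and "is_t_design 2 (positions C) (H C (n - k))"
  shows "\<forall>w. 2 \<le> w \<and> w \<le> n \<longrightarrow>
           is_t_design 2 (positions C) (H C w) \<and>
           is_t_design 2 (positions (dual_code C)) (H (dual_code C) w)"
proof -
  have k: "vec.dim C = k" and d: "min_dist C = n - k" and k3: "3 \<le> k" and d3: "3 \<le> n - k"
    using assms(2,3) by (auto simp: has_params_def)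
  have covering2: "const_on_card 2 (wt_covering C (n - k))"
    using assms(4) is_t_design_H_iff[OF NMDS_subspace[OF assms(1)]] d3 by simp
  moreover have covering1: "const_on_card 1 (wt_covering C (n - k))"
    using const_on_card_1_wt_covering[OF _ _ covering2] d3 by simp
  ultimately have avoiding: "const_on_card 1 (wt_avoiding C (min_dist C))"
                            "const_on_card 2 (wt_avoiding C (min_dist C))"
    using const_on_card_wt_avoiding_iff_wt_covering[of C "n - k"] d by simp_all
  have "wt_avoiding (dual_code C) (min_dist (dual_code C)) = wt_covering C (n - k)"
    using NMDS_wt_avoiding_dual_code[OF assms(1)] NMDS_min_dist_dual_code[OF assms(1)] k d k3 d3
    by auto
  then have dual_avoiding: "const_on_card 1 (wt_avoiding (dual_code C) (min_dist (dual_code C)))"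
                           "const_on_card 2 (wt_avoiding (dual_code C) (min_dist (dual_code C)))"
    using covering1 covering2 by simp_all
  show ?thesis
    using NMDS_is_2_design_H[OF assms(1) _ avoiding]
          NMDS_is_2_design_H[OF NMDS_dual_code[OF assms(1)] _ dual_avoiding]
    by simp
qed

end
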